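(* For every $\lambda$ in $$\Omega=\{\lambda\in\mathbb D:\ \mathrm{Re}(\lambda)\ge0,\ \mathrm{Im}(\lambda)\ge0\}\setminus B_{\sqrt3/2}(1/2)=\{\lambda\in\mathbb D:\ 0\le\mathrm{Re}(\lambda)\le|\lambda|^2-\tfrac12\},$$ the set $A_\lambda$ has non-empty interior.
   Context: $\mathbb D$ is the open unit disc; $B_r(z_0)$ is the open disc of radius $r$ centered at $z_0$. $A_\lambda=\{\sum_{n\ge0}a_n\lambda^n:a_n\in\{-1,1\}\}$, the attractor of the iterated function system $\{\lambda z-1,\lambda z+1\}$. *)

theory Defs
  imports "HOL-Analysis.Analysis"
begin

definition attractor :: "complex \<Rightarrow> complex set" where
  "attractor l = {(\<Sum>n. of_int (a n) * l ^ n) | a. \<forall>n. a n \<in> {-1, 1::int}}"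

definition Omega :: "complex set" where
  "Omega = {l. norm l < 1 \<and> Re l \<ge> 0 \<and> Im l \<ge> 0} - ball (1/2) (sqrt 3 / 2)"

end

theory Submission
  imports Defs
begin

text \<open>Let \<open>h = Im \<lambda> / |\<lambda>|\<^sup>2\<close> and let \<open>P\<close> be the parallelogram cut out by the
  strips \<open>|Im z| \<le> h\<close> and \<open>|Im (\<lambda> z)| \<le> h\<close>. It is bounded and contains the disc
  \<open>B\<^sub>h(0)\<close>. If \<open>1 + 2 |Re \<lambda>| \<le> 2 |\<lambda>|\<^sup>2\<close>, which for \<open>Re \<lambda> \<ge> 0\<close> says precisely that
  \<open>\<lambda>\<close> lies outside the disc of radius \<open>\<surd>3/2\<close> about \<open>1/2\<close>, then
  \<open>P \<subseteq> (\<lambda> P - 1) \<union> (\<lambda> P + 1)\<close>. Iterating this covering gives every point of \<open>P\<close> an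
  expansion \<open>\<Sum> a\<^sub>n \<lambda>\<^sup>n\<close> with digits \<open>\<plusminus>1\<close>, so \<open>P \<subseteq> A\<^sub>\<lambda>\<close>.\<close>

lemma digit_expansion_sums:
  fixes l :: "'a::real_normed_field" and z d :: "nat \<Rightarrow> 'a"
  assumes "norm l < 1" and "bounded (range z)"
    and step: "\<And>n. z n = l * z (Suc n) + d n"
  shows "(\<lambda>n. d n * l ^ n) sums z 0"
proof -
  have partial_sum: "(\<Sum>k<n. d k * l ^ k) = z 0 - l ^ n * z n" for n
  proof (induction n)
    case 0
    show ?case by simp
  next
    case (Suc n)
    then show ?case by (simp add: step[of n] algebra_simps)
  qed
  obtain B where B: "\<And>n. norm (z n) \<le> B"
    using \<open>bounded (range z)\<close> by (auto simp: bounded_iff)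
  have "(\<lambda>n. l ^ n * z n) \<longlonglongrightarrow> 0"
  proof (rule Lim_null_comparison)
    show "\<forall>\<^sub>F n in sequentially. norm (l ^ n * z n) \<le> norm l ^ n * B"
      using B by (intro always_eventually allI) (simp add: norm_mult norm_power mult_left_mono)
    show "(\<lambda>n. norm l ^ n * B) \<longlonglongrightarrow> 0"
      using \<open>norm l < 1\<close> by (intro tendsto_mult_left_zero LIMSEQ_power_zero) auto
  qed
  then have "(\<lambda>n. z 0 - l ^ n * z n) \<longlonglongrightarrow> z 0 - 0"
    by (intro tendsto_diff tendsto_const)
  then show ?thesis
    by (simp add: sums_def partial_sum)
qed

lemma subset_attractorI:
  assumes "norm l < 1" and "bounded K"
    and cover: "\<And>z. z \<in> K \<Longrightarrow> \<exists>a\<in>{-1, 1::int}. \<exists>w\<in>K. z = l * w + of_int a"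
  shows "K \<subseteq> attractor l"
proof
  fix z assume "z \<in> K"
  have "\<forall>w\<in>K. \<exists>p. fst p \<in> {-1, 1::int} \<and> snd p \<in> K \<and> w = l * snd p + of_int (fst p)"
    using cover by fastforce
  then obtain f
    where f: "\<forall>w\<in>K. fst (f w) \<in> {-1, 1::int} \<and> snd (f w) \<in> K \<and>
                     w = l * snd (f w) + of_int (fst (f w))"
    by (rule bchoice[elim_format]) blast
  define zs where "zs n = ((snd \<circ> f) ^^ n) z" for n
  define a where "a n = fst (f (zs n))" for n
  have zs_in: "zs n \<in> K" for n
    by (induction n) (simp_all add: zs_def \<open>z \<in> K\<close> f)
  have "(\<lambda>n. of_int (a n) * l ^ n) sums zs 0"
  proof (rule digit_expansion_sums)
    show "bounded (range zs)"
      using zs_in by (blast intro: bounded_subset[OF \<open>bounded K\<close>])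
    show "zs n = l * zs (Suc n) + of_int (a n)" for n
      using f zs_in[of n] by (simp add: zs_def a_def)
  qed (fact \<open>norm l < 1\<close>)
  then have "z = (\<Sum>n. of_int (a n) * l ^ n)"
    by (simp add: zs_def sums_iff)
  moreover have "\<forall>n. a n \<in> {-1, 1}"
    using f zs_in by (simp add: a_def)
  ultimately show "z \<in> attractor l"
    unfolding attractor_def by blast
qed

definition attractor_parallelogram :: "complex \<Rightarrow> complex set" where
  "attractor_parallelogram l =
     {z. \<bar>Im z\<bar> \<le> Im l / (cmod l)\<^sup>2 \<and> \<bar>Im (l * z)\<bar> \<le> Im l / (cmod l)\<^sup>2}"

lemma ball_subset_attractor_parallelogram:
  assumes "cmod l \<le> 1"
  shows "ball 0 (Im l / (cmod l)\<^sup>2) \<subseteq> attractor_parallelogram l"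
proof
  fix z :: complex assume "z \<in> ball 0 (Im l / (cmod l)\<^sup>2)"
  then have z: "cmod z < Im l / (cmod l)\<^sup>2" by simp
  have "\<bar>Im (l * z)\<bar> \<le> cmod l * cmod z"
    using abs_Im_le_cmod[of "l * z"] by (simp add: norm_mult)
  also have "\<dots> \<le> cmod z"
    using assms by (simp add: mult_left_le_one_le)
  finally show "z \<in> attractor_parallelogram l"
    using z abs_Im_le_cmod[of z] by (simp add: attractor_parallelogram_def)
qed

lemma bounded_attractor_parallelogram:
  assumes "Im l \<noteq> 0"
  shows "bounded (attractor_parallelogram l)"
proof -
  define h where "h = Im l / (cmod l)\<^sup>2"
  have "cmod z \<le> (h + \<bar>Re l\<bar> * h) / \<bar>Im l\<bar> + h"
    if "z \<in> attractor_parallelogram l" for z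
  proof -
    have im: "\<bar>Im z\<bar> \<le> h" and iml: "\<bar>Im (l * z)\<bar> \<le> h"
      using that by (simp_all add: attractor_parallelogram_def h_def)
    have "Im l * Re z = Im (l * z) - Re l * Im z"
      by simp
    moreover have "\<bar>Re l * Im z\<bar> \<le> \<bar>Re l\<bar> * h"
      using im by (simp add: abs_mult mult_left_mono)
    ultimately have "\<bar>Im l\<bar> * \<bar>Re z\<bar> \<le> h + \<bar>Re l\<bar> * h"
      using iml by (simp add: abs_mult[symmetric])
    then have "\<bar>Re z\<bar> \<le> (h + \<bar>Re l\<bar> * h) / \<bar>Im l\<bar>"
      using assms by (simp add: field_simps)
    then show ?thesis
      using im cmod_le[of z] by linarith
  qed
  then show ?thesis
    by (auto simp: bounded_iff)
qed

text \<open>For \<open>w = (z - a) / \<lambda>\<close> the strip condition on \<open>Im (\<lambda> w) = Im z\<close> is inherited,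
  while \<open>|\<lambda>|\<^sup>2 Im w = Im (z cnj \<lambda>) + a Im \<lambda>\<close>; a sign \<open>a\<close> making this at most \<open>Im \<lambda>\<close> in
  absolute value exists because \<open>|Im (z cnj \<lambda>)| \<le> (1 + 2 |Re \<lambda>|) h \<le> 2 Im \<lambda>\<close>.\<close>
lemma attractor_parallelogram_self_covering:
  assumes "Im l > 0" and "1 + 2 * \<bar>Re l\<bar> \<le> 2 * (cmod l)\<^sup>2"
    and "z \<in> attractor_parallelogram l"
  shows "\<exists>a\<in>{-1, 1::int}. \<exists>w\<in>attractor_parallelogram l. z = l * w + of_int a"
proof -
  define \<rho> where "\<rho> = (cmod l)\<^sup>2"
  define h where "h = Im l / \<rho>"
  define t where "t = Im (z * cnj l)"
  define a :: int where "a = (if t \<ge> 0 then -1 else 1)"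
  define w where "w = (z - of_int a) / l"
  have "l \<noteq> 0" and \<rho>: "\<rho> > 0"
    using \<open>Im l > 0\<close> by (auto simp: \<rho>_def)
  have im: "\<bar>Im z\<bar> \<le> h" and iml: "\<bar>Im (l * z)\<bar> \<le> h"
    using assms(3) by (simp_all add: attractor_parallelogram_def h_def \<rho>_def)
  have t_eq: "t = 2 * Re l * Im z - Im (l * z)"
    by (simp add: t_def algebra_simps)
  have "\<bar>2 * Re l * Im z\<bar> \<le> 2 * \<bar>Re l\<bar> * h"
    using im by (simp add: abs_mult mult_left_mono)
  then have "\<bar>t\<bar> \<le> 2 * \<bar>Re l\<bar> * h + h"
    using iml abs_triangle_ineq4[of "2 * Re l * Im z" "Im (l * z)"] unfolding t_eq by linarith
  also have "\<dots> = h * (1 + 2 * \<bar>Re l\<bar>)"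
    by (simp add: algebra_simps)
  also have "\<dots> \<le> h * (2 * \<rho>)"
    using assms(1,2) \<rho> by (intro mult_left_mono) (simp_all add: h_def \<rho>_def)
  also have "\<dots> = 2 * Im l"
    using \<rho> by (simp add: h_def)
  finally have "\<bar>t + of_int a * Im l\<bar> \<le> Im l"
    using \<open>Im l > 0\<close> by (auto simp: a_def)
  moreover have "Im w = (t + of_int a * Im l) / \<rho>"
    by (simp add: w_def t_def \<rho>_def Im_divide cmod_power2 algebra_simps)
  ultimately have "\<bar>Im w\<bar> \<le> h"
    using \<rho> by (simp add: h_def abs_div divide_right_mono)
  moreover have "Im (l * w) = Im z"
    using \<open>l \<noteq> 0\<close> by (simp add: w_def)
  ultimately have "w \<in> attractor_parallelogram l"
    using im by (simp add: attractor_parallelogram_def h_def \<rho>_def)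
  moreover have "z = l * w + of_int a"
    using \<open>l \<noteq> 0\<close> by (simp add: w_def)
  ultimately show ?thesis
    by (auto simp: a_def)
qed

lemma interior_attractor_nonempty:
  assumes "Im l > 0" and "cmod l < 1" and "1 + 2 * \<bar>Re l\<bar> \<le> 2 * (cmod l)\<^sup>2"
  shows "interior (attractor l) \<noteq> {}"
proof -
  have "attractor_parallelogram l \<subseteq> attractor l"
    using assms attractor_parallelogram_self_covering
    by (intro subset_attractorI bounded_attractor_parallelogram) auto
  then have "ball 0 (Im l / (cmod l)\<^sup>2) \<subseteq> interior (attractor l)"
    using ball_subset_attractor_parallelogram[of l] \<open>cmod l < 1\<close>
    by (intro interior_maximal) auto
  moreover have "0 \<in> ball 0 (Im l / (cmod l)\<^sup>2)"
    using \<open>Im l > 0\<close> by (auto simp: zero_less_divide_iff)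
  ultimately show ?thesis
    by blast
qed

lemma OmegaD:
  assumes "l \<in> Omega"
  shows "Im l > 0" and "cmod l < 1" and "1 + 2 * \<bar>Re l\<bar> \<le> 2 * (cmod l)\<^sup>2"
proof -
  have "cmod l < 1" and re: "Re l \<ge> 0" and "Im l \<ge> 0"
    and far: "sqrt 3 / 2 \<le> dist (1/2) l"
    using assms by (auto simp: Omega_def)
  have "(sqrt 3 / 2)\<^sup>2 \<le> (dist (1/2) l)\<^sup>2"
    using far by (intro power_mono) auto
  then have "3/4 \<le> (1/2 - Re l)\<^sup>2 + (Im l)\<^sup>2"
    by (simp add: dist_norm cmod_power2 power_divide)
  then show outside: "1 + 2 * \<bar>Re l\<bar> \<le> 2 * (cmod l)\<^sup>2"
    unfolding cmod_power2 using re by (simp add: power2_eq_square algebra_simps)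
  show "cmod l < 1" by fact
  show "Im l > 0"
  proof (rule ccontr)
    assume "\<not> Im l > 0"
    then have "(cmod l)\<^sup>2 = (Re l)\<^sup>2"
      using \<open>Im l \<ge> 0\<close> by (simp add: cmod_power2)
    moreover have "(Re l)\<^sup>2 \<le> Re l"
      using re \<open>cmod l < 1\<close> abs_Re_le_cmod[of l]
      by (simp add: power2_eq_square mult_left_le_one_le)
    ultimately show False
      using outside re by simp
  qed
qed

theorem mainTheorem11:
  assumes "l \<in> Omega"
  shows "interior (attractor l) \<noteq> {}"
  using OmegaD[OF assms] by (rule interior_attractor_nonempty)

end
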